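(* Let $p(x,y)$ be a real polynomial with $p(0,0)=0$, $\nabla p(0,0)=(0,0)$, $\dim\operatorname{Co}N_p=2$, such that for every $A\in\mathbb{N}^2$ the main $A$-quasi-homogeneous form of $p$ is nonnegative on $\mathbb{R}^2$. Let $A=(A_1,A_2)\in\mathcal{A}_p$ with $g_2^A(u_0)\neq0$ for all $u_0\in U_p(A)$, and let $x^{\chi_1}y^{\eta_1}$ be the monomial of the main term of $\varphi_2^A$. Then the following are equivalent: (i) for all $(x,y)$ with $\varphi_1^A(x,y)=0$, $x\neq0$, $y\neq0$ one has $\varphi_2^A(x,y)>0$; (ii) for every $u_0\in U_p(A)$ the system $x\neq0$, $y\neq0$, $x^{-A_2}y^{A_1}=u_0$, $x^{\chi_1}y^{\eta_1}g_2^A(u_0)<0$ has no real solution.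
   Context: $\mathbb{N}=\{1,2,\dots\}$; $\mathbb{N}_0^2$ is the set of $(A_1,A_2)\in\mathbb{N}^2$ with $\gcd(A_1,A_2)=1$. $N_p$ is the support of $p$ and $\operatorname{Co}N_p$ its convex hull. For $A\in\mathbb{N}^2$ the main $A$-quasi-homogeneous form of $p$ is the sum of the terms of $p$ whose exponent vectors $k$ minimize $\langle A,k\rangle$ over $N_p$. For $A\in\mathbb{N}_0^2$, with $B_1^A<B_2^A<\dots$ the distinct values of $\langle A,k\rangle$ on $N_p$, $\varphi_i^A$ is the sum of terms of $p$ with $\langle A,k\rangle=B_i^A$. For such a form $\sum_i c_ix^{\gamma_i}y^{\delta_i}$ ($c_i\ne0$, $\gamma_1>\gamma_2>\dots$), its main term is $c_1x^{\gamma_1}y^{\delta_1}$ and its characteristic polynomial is $\sum_ic_iu^{(\gamma_1-\gamma_i)/A_2}$; $g_1^A,g_2^A$ are those of $\varphi_1^A,\varphi_2^A$. $\mathcal{A}_p$ is the set of $A\in\mathbb{N}_0^2$ such that $\varphi_1^A$ has at least three terms, $g_1^A\ge0$ on $\mathbb{R}$, and $g_1^A$ has a real root; $U_p(A)$ is the set of real roots of $g_1^A$. *)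

theory Defs
  imports "HOL-Analysis.Analysis" "HOL-Computational_Algebra.Polynomial"
begin

text \<open>A real polynomial in two variables x, y is represented by its coefficient
  function c :: nat \<times> nat \<Rightarrow> real (c (i,j) is the coefficient of x^i y^j)
  with finite support.\<close>

definition supp2 :: "(nat \<times> nat \<Rightarrow> real) \<Rightarrow> (nat \<times> nat) set" where
  "supp2 c = {k. c k \<noteq> 0}"

definition peval :: "(nat \<times> nat \<Rightarrow> real) \<Rightarrow> real \<Rightarrow> real \<Rightarrow> real" where
  "peval c x y = (\<Sum>k\<in>supp2 c. c k * x ^ fst k * y ^ snd k)"

definition wdeg :: "nat \<times> nat \<Rightarrow> nat \<times> nat \<Rightarrow> nat" where
  "wdeg A k = fst A * fst k + snd A * snd k"

definition Bval :: "(nat \<times> nat \<Rightarrow> real) \<Rightarrow> nat \<times> nat \<Rightarrow> nat \<Rightarrow> nat" where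
  "Bval c A i = sorted_list_of_set (wdeg A ` supp2 c) ! (i - 1)"

text \<open>phi c A i = sum of the terms of p with <A,k> = B_i (i \<ge> 1).\<close>
definition phi :: "(nat \<times> nat \<Rightarrow> real) \<Rightarrow> nat \<times> nat \<Rightarrow> nat \<Rightarrow> (nat \<times> nat \<Rightarrow> real)" where
  "phi c A i = (\<lambda>k. if k \<in> supp2 c \<and> wdeg A k = Bval c A i then c k else 0)"

definition main_form :: "(nat \<times> nat \<Rightarrow> real) \<Rightarrow> nat \<times> nat \<Rightarrow> (nat \<times> nat \<Rightarrow> real)" where
  "main_form c A = (\<lambda>k. if k \<in> supp2 c \<and> wdeg A k = Min (wdeg A ` supp2 c) then c k else 0)"

definition char_poly :: "(nat \<times> nat \<Rightarrow> real) \<Rightarrow> nat \<times> nat \<Rightarrow> real poly" where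
  "char_poly f A = (\<Sum>k\<in>supp2 f. monom (f k) ((Max (fst ` supp2 f) - fst k) div snd A))"

definition in_N0 :: "nat \<times> nat \<Rightarrow> bool" where
  "in_N0 A \<longleftrightarrow> fst A > 0 \<and> snd A > 0 \<and> coprime (fst A) (snd A)"

definition in_Ap :: "(nat \<times> nat \<Rightarrow> real) \<Rightarrow> nat \<times> nat \<Rightarrow> bool" where
  "in_Ap c A \<longleftrightarrow> in_N0 A \<and> card (supp2 (phi c A 1)) \<ge> 3
     \<and> (\<forall>u. poly (char_poly (phi c A 1) A) u \<ge> 0)
     \<and> (\<exists>u. poly (char_poly (phi c A 1) A) u = 0)"

definition Up :: "(nat \<times> nat \<Rightarrow> real) \<Rightarrow> nat \<times> nat \<Rightarrow> real set" where
  "Up c A = {u. poly (char_poly (phi c A 1) A) u = 0}"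

end

(*
  An A-quasi-homogeneous form f whose main term has monomial x^M y^m factors, for x \<noteq> 0, as
  f(x,y) = x^M y^m g(x^(-A2) y^A1) with g its characteristic polynomial: coprimality of A1, A2
  forces every exponent of f to be (M - A2 t, m + A1 t) for some t.  So phi_1 vanishes at (x,y)
  with xy \<noteq> 0 exactly when u = x^(-A2) y^A1 lies in U_p(A), and then phi_2(x,y) = x^chi1 y^eta1 g_2(u)
  is nonzero; positivity of phi_2 is therefore the absence of a negative sign.
*)
theory Submission imports Defs begin

lemma supp2_phi: "supp2 (phi c A i) = {k \<in> supp2 c. wdeg A k = Bval c A i}"
  unfolding supp2_def phi_def by auto

lemma wdeg_eq_exponents:
  fixes A1 A2 :: nat
  assumes A: "0 < A2" "coprime A1 A2"
    and eq: "wdeg (A1, A2) (k1, k2) = wdeg (A1, A2) (M, m)" and le: "k1 \<le> M"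
  obtains t where "M = k1 + A2 * t" "k2 = m + A1 * t"
proof -
  have shift: "A2 * k2 = A2 * m + A1 * (M - k1)"
    using eq le unfolding wdeg_def by (simp add: diff_mult_distrib2)
  then have "m \<le> k2"
    using A(1) by (metis le_add1 mult_le_cancel1 neq0_conv)
  with shift have lin: "A1 * (M - k1) = A2 * (k2 - m)"
    by (simp add: diff_mult_distrib2)
  then have "A2 dvd M - k1"
    using A(2) by (metis coprime_commute coprime_dvd_mult_right_iff dvd_triv_left)
  then obtain t where t: "M - k1 = A2 * t" by blast
  with lin A(1) have "k2 - m = A1 * t" by simp
  with t le \<open>m \<le> k2\<close> show thesis by (intro that[of t]) simp_all
qed

lemma monomial_eq_monomial_mult_power:
  fixes x y :: real
  assumes "x \<noteq> 0" "M = k1 + A2 * t" "k2 = m + A1 * t"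
  shows "x ^ k1 * y ^ k2 = x ^ M * y ^ m * (x powi (- int A2) * y ^ A1) ^ t"
  using assms
  by (simp add: power_int_minus power_mult_distrib power_add power_mult field_simps)

lemma peval_eq_monomial_mult_char_poly:
  fixes f :: "nat \<times> nat \<Rightarrow> real" and x y :: real
  assumes fin: "finite (supp2 f)" and A: "0 < A2" "coprime A1 A2"
    and hom: "\<forall>k\<in>supp2 f. wdeg (A1, A2) k = B"
    and Mm: "(M, m) \<in> supp2 f" and Mmax: "\<forall>k\<in>supp2 f. fst k \<le> M"
    and x: "x \<noteq> 0"
  shows "peval f x y = x ^ M * y ^ m * poly (char_poly f (A1, A2)) (x powi (- int A2) * y ^ A1)"
proof -
  let ?u = "x powi (- int A2) * y ^ A1"
  have Max_fst: "Max (fst ` supp2 f) = M"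
    using fin Mm Mmax by (intro Max_eqI) force+
  have term_eq: "f (k1, k2) * x ^ k1 * y ^ k2 = x ^ M * y ^ m * (f (k1, k2) * ?u ^ ((M - k1) div A2))"
    if k: "(k1, k2) \<in> supp2 f" for k1 k2
  proof -
    have "wdeg (A1, A2) (k1, k2) = wdeg (A1, A2) (M, m)" and "k1 \<le> M"
      using hom Mmax k Mm by force+
    then obtain t where t: "M = k1 + A2 * t" "k2 = m + A1 * t"
      by (rule wdeg_eq_exponents[OF A])
    then have "(M - k1) div A2 = t" using A(1) by simp
    with monomial_eq_monomial_mult_power[OF x t] show ?thesis by simp
  qed
  have "peval f x y = (\<Sum>k\<in>supp2 f. x ^ M * y ^ m * (f k * ?u ^ ((M - fst k) div A2)))"
    unfolding peval_def by (intro sum.cong refl) (metis term_eq prod.collapse)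
  also have "\<dots> = x ^ M * y ^ m * poly (char_poly f (A1, A2)) ?u"
    unfolding char_poly_def Max_fst by (simp add: poly_sum poly_monom sum_distrib_left)
  finally show ?thesis .
qed

theorem corollary1:
  fixes c :: "nat \<times> nat \<Rightarrow> real" and A1 A2 \<chi>1 \<eta>1 :: nat
  assumes fin: "finite (supp2 c)"
    and p0: "peval c 0 0 = 0"
    and grad: "((\<lambda>z. peval c (fst z) (snd z)) has_derivative (\<lambda>_. 0)) (at (0, 0))"
    and dim2: "aff_dim (convex hull ((\<lambda>k. (real (fst k), real (snd k))) ` supp2 c)) = 2"
    and mainnn: "\<forall>A. fst A > 0 \<and> snd A > 0 \<longrightarrow> (\<forall>x y. peval (main_form c A) x y \<ge> 0)"
    and AAp: "in_Ap c (A1, A2)"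
    and g2: "\<forall>u0\<in>Up c (A1, A2). poly (char_poly (phi c (A1, A2) 2) (A1, A2)) u0 \<noteq> 0"
    and mt1: "(\<chi>1, \<eta>1) \<in> supp2 (phi c (A1, A2) 2)"
    and mt2: "\<forall>k\<in>supp2 (phi c (A1, A2) 2). fst k \<le> \<chi>1"
  shows "(\<forall>x y. peval (phi c (A1, A2) 1) x y = 0 \<and> x \<noteq> 0 \<and> y \<noteq> 0
              \<longrightarrow> peval (phi c (A1, A2) 2) x y > 0)
    \<longleftrightarrow> (\<forall>u0\<in>Up c (A1, A2). \<not> (\<exists>x y::real. x \<noteq> 0 \<and> y \<noteq> 0 \<and>
              x powi (- int A2) * y ^ A1 = u0 \<and>
              x ^ \<chi>1 * y ^ \<eta>1 * poly (char_poly (phi c (A1, A2) 2) (A1, A2)) u0 < 0))"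
proof -
  let ?f1 = "phi c (A1, A2) 1" and ?f2 = "phi c (A1, A2) 2"
  let ?g1 = "char_poly ?f1 (A1, A2)" and ?g2 = "char_poly ?f2 (A1, A2)"
  let ?u = "\<lambda>x y :: real. x powi (- int A2) * y ^ A1"
  have A: "0 < A2" "coprime A1 A2" using AAp unfolding in_Ap_def in_N0_def by auto
  have fin1: "finite (supp2 ?f1)" and fin2: "finite (supp2 ?f2)"
    using fin unfolding supp2_phi by auto
  have "supp2 ?f1 \<noteq> {}" using AAp unfolding in_Ap_def by auto
  then have "Max (fst ` supp2 ?f1) \<in> fst ` supp2 ?f1" using fin1 by simp
  then obtain M m where Mm: "(M, m) \<in> supp2 ?f1" and M: "M = Max (fst ` supp2 ?f1)" by force
  have Mmax: "\<forall>k\<in>supp2 ?f1. fst k \<le> M" using fin1 M by simp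
  have pointwise: "(peval ?f1 x y = 0 \<longrightarrow> peval ?f2 x y > 0) \<longleftrightarrow>
      (?u x y \<in> Up c (A1, A2) \<longrightarrow> \<not> x ^ \<chi>1 * y ^ \<eta>1 * poly ?g2 (?u x y) < 0)"
    if xy: "x \<noteq> 0" "y \<noteq> 0" for x y
  proof -
    have "peval ?f1 x y = x ^ M * y ^ m * poly ?g1 (?u x y)"
      using peval_eq_monomial_mult_char_poly[OF fin1 A _ Mm Mmax xy(1)] supp2_phi by blast
    then have zero_iff: "peval ?f1 x y = 0 \<longleftrightarrow> ?u x y \<in> Up c (A1, A2)"
      using xy unfolding Up_def by simp
    have "peval ?f2 x y = x ^ \<chi>1 * y ^ \<eta>1 * poly ?g2 (?u x y)"
      using peval_eq_monomial_mult_char_poly[OF fin2 A _ mt1 mt2 xy(1)] supp2_phi by blast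
    moreover have "?u x y \<in> Up c (A1, A2) \<Longrightarrow> x ^ \<chi>1 * y ^ \<eta>1 * poly ?g2 (?u x y) \<noteq> 0"
      using g2 xy by simp
    ultimately show ?thesis unfolding zero_iff by (metis neq_iff less_asym)
  qed
  show ?thesis
    using pointwise by blast
qed

end
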